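(* For all integers $r,n,\nu\ge 0$ and all real $x$, $$\frac{d^\nu}{dx^\nu}H_{r,n}(x)=r!\,n!\sum_{j=0}^{\nu}\alpha_{j,\nu}\,\frac{H_{r-\nu+j,\,n-j}(x)}{(r-\nu+j)!\,(n-j)!},$$ where any term with $r-\nu+j<0$ or $n-j<0$ is interpreted as $0$, and the numbers $\alpha_{j,\nu}$ ($0\le j\le\nu$) are defined by $\alpha_{0,\nu}=2^\nu$, $\alpha_{\nu,\nu}=1$, and $\alpha_{j,\nu}=2\alpha_{j,\nu-1}+\alpha_{j-1,\nu-1}$ for $1\le j<\nu$.
   Context: For integers $m,n\ge 0$, the two-index Hermite polynomial is $H_{m,n}(x)=\left(-\frac{d}{dx}+2x\right)^m(x^n)$, i.e. the operator $f\mapsto -f'+2xf$ applied $m$ times to $x^n$; by convention $H_{m,n}=0$ whenever $m<0$ or $n<0$. *)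

theory Defs
  imports "HOL-Analysis.Analysis"
begin

definition hop :: "(real \<Rightarrow> real) \<Rightarrow> real \<Rightarrow> real" where
  "hop f = (\<lambda>x. - deriv f x + 2 * x * f x)"

definition H :: "int \<Rightarrow> int \<Rightarrow> real \<Rightarrow> real" where
  "H m n = (if m < 0 \<or> n < 0 then (\<lambda>_. 0) else (hop ^^ nat m) (\<lambda>x. x ^ nat n))"

fun alpha :: "nat \<Rightarrow> nat \<Rightarrow> real" where
  "alpha j 0 = (if j = 0 then 1 else 0)"
| "alpha j (Suc v) = (if j = 0 then 2 ^ Suc v else if j = Suc v then 1
      else if j < Suc v then 2 * alpha j v + alpha (j - 1) v else 0)"

end

theory Submission
  imports Defs "HOL-Computational_Algebra.Polynomial"
begin

(* Iterating f \<mapsto> -f' + 2xf on x^n only ever produces polynomials, so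
   H_{m,n} is the evaluation of a real polynomial hermite_poly m n, defined by the
   same recursion on the polynomial ring, where differentiation is pderiv.
   The key fact is the first-order rule
       H_{m,n}' = n H_{m,n-1} + 2m H_{m-1,n},
   proved by induction on m.  After normalising, G_{m,n} = H_{m,n} / (m! n!) (and
   G_{m,n} = 0 for a negative index), the rule becomes G_{m,n}' = G_{m,n-1} + 2 G_{m-1,n}
   for all integer m, n.  Iterating it \<nu> times gives
       G_{m,n}^{(\<nu>)} = \<Sum>_{j\<le>\<nu>} \<alpha>_{j,\<nu>} G_{m-\<nu>+j, n-j},
   since the coefficients obey exactly the Pascal-type recursion defining \<alpha>.
   The theorem follows by evaluating this polynomial identity, scaled by r! n!,
   and by transporting iterated derivatives of polynomial functions to pderiv. *)

fun hermite_poly :: "nat \<Rightarrow> nat \<Rightarrow> real poly" where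
  "hermite_poly 0 n = monom 1 n"
| "hermite_poly (Suc m) n = - pderiv (hermite_poly m n) + [:0,2:] * hermite_poly m n"

lemma deriv_poly: "deriv (poly p) = poly (pderiv p)"
  by (rule ext) (rule DERIV_imp_deriv[OF poly_DERIV])

lemma higher_deriv_poly: "(deriv ^^ v) (poly p) = poly ((pderiv ^^ v) p)"
  by (induction v arbitrary: p) (simp_all only: funpow_0 funpow_Suc_right o_apply deriv_poly)

lemma hop_iterate_monomial: "(hop ^^ m) (\<lambda>x. x ^ n) = poly (hermite_poly m n)"
proof (induction m)
  case 0
  show ?case by (simp add: poly_monom fun_eq_iff)
next
  case (Suc m)
  have "(hop ^^ Suc m) (\<lambda>x. x ^ n) = hop (poly (hermite_poly m n))"
    by (simp add: Suc.IH)
  also have "\<dots> = poly (hermite_poly (Suc m) n)"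
    by (simp add: hop_def deriv_poly fun_eq_iff)
  finally show ?case .
qed

lemma pderiv_mult_2x: "pderiv ([:0,2:] * p) = [:0,2:] * pderiv p + smult 2 (p :: real poly)"
  by (simp add: pderiv_mult pderiv_pCons pderiv_smult)

lemma pderiv_hermite_poly:
  "pderiv (hermite_poly m n) =
     smult (real n) (hermite_poly m (n - 1)) + smult (2 * real m) (hermite_poly (m - 1) n)"
proof (induction m arbitrary: n)
  case 0
  show ?case by (simp add: pderiv_monom smult_monom)
next
  case (Suc m)
  let ?P = hermite_poly and ?X2 = "[:0,2:] :: real poly"
  \<comment> \<open>the raising operator commutes past the derivative rule of the induction hypothesis\<close>
  have raise: "- pderiv (smult c p) + ?X2 * smult c p = smult c (- pderiv p + ?X2 * p)"
    for c and p :: "real poly"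
    by (simp only: pderiv_smult mult_smult_right smult_add_right smult_minus_right)
  \<comment> \<open>for \<open>m = 0\<close> the second term vanishes, otherwise \<open>Suc (m - 1) = m\<close>\<close>
  have lower: "smult (2 * real m) (?P (Suc (m - 1)) n) = smult (2 * real m) (?P m n)"
    by (cases m) simp_all
  have "pderiv (?P (Suc m) n) = - pderiv (pderiv (?P m n)) + ?X2 * pderiv (?P m n) + smult 2 (?P m n)"
    by (simp only: hermite_poly.simps pderiv_add pderiv_minus pderiv_mult_2x add.assoc)
  also have "\<dots> = smult (real n) (- pderiv (?P m (n - 1)) + ?X2 * ?P m (n - 1))
      + smult (2 * real m) (- pderiv (?P (m - 1) n) + ?X2 * ?P (m - 1) n) + smult 2 (?P m n)"
    unfolding Suc.IH[of n] pderiv_add raise[symmetric] by (simp only: algebra_simps)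
  also have "\<dots> = smult (real n) (?P (Suc m) (n - 1)) + smult (2 * real m) (?P m n) + smult 2 (?P m n)"
    using lower by simp
  finally show ?case by (simp add: algebra_simps smult_add_left[symmetric])
qed

text \<open>\<open>G_{m,n} = H_{m,n} / (m! n!)\<close>, and \<open>0\<close> if an index is negative; this is the
  form in which the derivative rule has constant coefficients.\<close>
definition hermite_normal :: "int \<Rightarrow> int \<Rightarrow> real poly" where
  "hermite_normal m n = (if m < 0 \<or> n < 0 then 0
     else smult (1 / (fact (nat m) * fact (nat n))) (hermite_poly (nat m) (nat n)))"

lemma pderiv_hermite_normal:
  "pderiv (hermite_normal m n) = hermite_normal m (n - 1) + smult 2 (hermite_normal (m - 1) n)"
proof (cases "m < 0 \<or> n < 0")
  case True
  then show ?thesis by (auto simp: hermite_normal_def)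
next
  case False
  then obtain a b where ab: "m = int a" "n = int b"
    by (metis nonneg_int_cases not_less)
  let ?c = "1 / (fact a * fact b) :: real"
  have "pderiv (hermite_normal m n) =
      smult (?c * real b) (hermite_poly a (b - 1)) + smult (?c * (2 * real a)) (hermite_poly (a - 1) b)"
    by (simp add: hermite_normal_def ab pderiv_smult pderiv_hermite_poly smult_add_right)
  \<comment> \<open>dividing by \<open>b!\<close> (resp. \<open>a!\<close>) absorbs the multiplier of the lowered index\<close>
  moreover have "smult (?c * real b) (hermite_poly a (b - 1)) = hermite_normal m (n - 1)"
  proof (cases b)
    case (Suc k)
    then have "?c * real b = 1 / (fact a * fact k)" by (simp add: divide_simps)
    then show ?thesis by (simp add: hermite_normal_def ab Suc)
  qed (simp add: hermite_normal_def ab)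
  moreover have "smult (?c * (2 * real a)) (hermite_poly (a - 1) b) = smult 2 (hermite_normal (m - 1) n)"
  proof (cases a)
    case (Suc k)
    then have "?c * (2 * real a) = 2 * (1 / (fact k * fact b))" by (simp add: divide_simps)
    then show ?thesis by (simp add: hermite_normal_def ab Suc)
  qed (simp add: hermite_normal_def ab)
  ultimately show ?thesis by simp
qed

text \<open>The recursion of \<open>alpha\<close> as a single equation valid for every \<open>j\<close>
  (using \<open>alpha j v = 0\<close> for \<open>j > v\<close>).\<close>
lemma alpha_Suc: "alpha j (Suc v) = 2 * alpha j v + (if j = 0 then 0 else alpha (j - 1) v)"
proof -
  have above: "j > v \<Longrightarrow> alpha j v = 0" for j v by (cases v) auto
  have diagonal: "alpha v v = 1" for v by (cases v) auto
  have first: "alpha 0 v = 2 ^ v" for v by (cases v) auto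
  consider "j = 0" | "j = Suc v" | "0 < j \<and> j < Suc v" | "j > Suc v" by linarith
  then show ?thesis
    by cases (simp_all add: first diagonal above)
qed

lemma smult_sum_right: "smult c (sum f A) = (\<Sum>x\<in>A. smult c (f x))"
  by (induction A rule: infinite_finite_induct) (simp_all add: smult_add_right)

lemma higher_pderiv_hermite_normal:
  "(pderiv ^^ v) (hermite_normal m n) =
     (\<Sum>j\<le>v. smult (alpha j v) (hermite_normal (m - int v + int j) (n - int j)))"
proof (induction v)
  case 0
  show ?case by simp
next
  case (Suc v)
  define F where "F j = hermite_normal (m - int (Suc v) + int j) (n - int j)" for j
  have "(pderiv ^^ Suc v) (hermite_normal m n) = pderiv ((pderiv ^^ v) (hermite_normal m n))"
    by simp
  also have "\<dots> = (\<Sum>j\<le>v. smult (alpha j v) (F (Suc j))) + smult 2 (\<Sum>j\<le>v. smult (alpha j v) (F j))"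
    unfolding Suc.IH higher_pderiv_sum[of 1, simplified] pderiv_smult pderiv_hermite_normal F_def
    by (simp add: smult_add_right sum.distrib smult_sum_right algebra_simps)
  also have "\<dots> = (\<Sum>j\<le>Suc v. smult (alpha j (Suc v)) (F j))"
  proof -
    have "alpha (Suc v) v = 0" by (cases v) auto
    then have doubled: "(\<Sum>j\<le>Suc v. smult (2 * alpha j v) (F j)) = smult 2 (\<Sum>j\<le>v. smult (alpha j v) (F j))"
      by (simp add: smult_sum_right)
    have shifted: "(\<Sum>j\<le>Suc v. smult (if j = 0 then 0 else alpha (j - 1) v) (F j))
        = (\<Sum>j\<le>v. smult (alpha j v) (F (Suc j)))"
      by (subst sum.atMost_Suc_shift) simp
    show ?thesis
      unfolding alpha_Suc smult_add_left sum.distrib doubled shifted by simp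
  qed
  finally show ?case by (simp add: F_def)
qed

theorem mainTheorem15:
  fixes r n \<nu> :: nat and x :: real
  shows "(deriv ^^ \<nu>) (H (int r) (int n)) x =
    fact r * fact n * (\<Sum>j = 0..\<nu>. alpha j \<nu> *
      (if int r - int \<nu> + int j < 0 \<or> int n - int j < 0 then 0
       else H (int r - int \<nu> + int j) (int n - int j) x /
            (fact (nat (int r - int \<nu> + int j)) * fact (nat (int n - int j)))))"
proof -
  have H_as_poly: "H (int r) (int n) = poly (smult (fact r * fact n) (hermite_normal (int r) (int n)))"
    by (simp add: H_def hermite_normal_def hop_iterate_monomial fun_eq_iff)
  have eval_normal: "poly (hermite_normal a b) x =
      (if a < 0 \<or> b < 0 then 0 else H a b x / (fact (nat a) * fact (nat b)))" for a b
    by (simp add: hermite_normal_def H_def hop_iterate_monomial)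
  show ?thesis
    unfolding H_as_poly higher_deriv_poly higher_pderiv_smult higher_pderiv_hermite_normal
    by (simp add: poly_sum eval_normal atLeast0AtMost)
qed

end
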